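(* Let $N, M$ be positive integers, let $B=[b_{ij}]$ be a real $N\times M$ matrix and $C=[c_{ij}]$ a real $M\times N$ matrix. Define the ultradiscrete product $B\otimes C$ as the $N\times N$ matrix $$B\otimes C=\Big[\max_{1\le k\le M}(b_{ik}+c_{kj})\Big]_{1\le i,j\le N}.$$ Then $$\mathrm{UP}[B\otimes C]=\max_{1\le j_1\le j_2\le\cdots\le j_N\le M}\Big(\mathrm{UP}[B]^{1\dots N}_{j_1\dots j_N}+\mathrm{UP}[C]^{j_1\dots j_N}_{1\dots N}\Big).$$
   Context: For a real $N\times N$ matrix $A=[a_{ij}]$, the ultradiscrete permanent is $\mathrm{UP}[A]=\max_{\pi}(a_{1\pi_1}+a_{2\pi_2}+\cdots+a_{N\pi_N})$, the maximum over all permutations $\pi=(\pi_1,\dots,\pi_N)$ of $\{1,\dots,N\}$. For indices $1\le j_1\le\cdots\le j_N\le M$ (repetitions allowed), $\mathrm{UP}[B]^{1\dots N}_{j_1\dots j_N}$ denotes the ultradiscrete permanent of the $N\times N$ matrix whose $k$-th column is the $j_k$-th column of $B$ (all rows of $B$ kept), and $\mathrm{UP}[C]^{j_1\dots j_N}_{1\dots N}$ denotes the ultradiscrete permanent of the $N\times N$ matrix whose $k$-th row is the $j_k$-th row of $C$ (all columns of $C$ kept). *)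

theory Defs
  imports Complex_Main "HOL-Combinatorics.Permutations"
begin

text \<open>Matrices are functions nat => nat => real, indices 1-based.
  UP A n: ultradiscrete permanent of the n x n matrix with entries A i j, 1 <= i,j <= n.\<close>
definition UP :: "(nat \<Rightarrow> nat \<Rightarrow> real) \<Rightarrow> nat \<Rightarrow> real" where
  "UP A n = Max {(\<Sum>i=1..n. A i (p i)) | p. p permutes {1..n}}"

definition ud_prod :: "nat \<Rightarrow> (nat \<Rightarrow> nat \<Rightarrow> real) \<Rightarrow> (nat \<Rightarrow> nat \<Rightarrow> real) \<Rightarrow> (nat \<Rightarrow> nat \<Rightarrow> real)" where
  "ud_prod M B C = (\<lambda>i j. Max {B i k + C k j | k. k \<in> {1..M}})"

definition sel_cols :: "(nat \<Rightarrow> nat \<Rightarrow> real) \<Rightarrow> nat list \<Rightarrow> (nat \<Rightarrow> nat \<Rightarrow> real)" where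
  "sel_cols B js = (\<lambda>i k. B i (js ! (k - 1)))"

definition sel_rows :: "(nat \<Rightarrow> nat \<Rightarrow> real) \<Rightarrow> nat list \<Rightarrow> (nat \<Rightarrow> nat \<Rightarrow> real)" where
  "sel_rows C js = (\<lambda>k j. C (js ! (k - 1)) j)"

end

theory Submission
  imports Defs
begin

text \<open>Expanding \<open>UP[B \<otimes> C]\<close> along a maximising permutation \<sigma> and, in each entry, a
  maximising middle index \<open>f i\<close>, gives \<open>\<Sum>i. b(i, f i) + c(f i, \<sigma> i)\<close>. Sorting the values of
  \<open>f\<close> into a non-decreasing list \<open>js\<close> turns \<open>f\<close> into \<open>i \<mapsto> js(\<tau> i)\<close> for a permutation \<tau>, and
  the two halves of the sum become permutation sums of the column selection of \<open>B\<close> (along \<tau>)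
  and the row selection of \<open>C\<close> (along \<open>\<sigma> \<circ> \<tau>\<^sup>-\<^sup>1\<close>). Conversely, two maximising permutations
  for the selections combine into one permutation sum of \<open>B \<otimes> C\<close> that dominates them.\<close>

lemma finite_permutation_sums:
  fixes A :: "nat \<Rightarrow> nat \<Rightarrow> 'a::comm_monoid_add"
  shows "finite {(\<Sum>i=1..n. A i (p i)) | p. p permutes {1..n}}"
proof -
  have "{(\<Sum>i=1..n. A i (p i)) | p. p permutes {1..n}} =
      (\<lambda>p. \<Sum>i=1..n. A i (p i)) ` {p. p permutes {1..n}}"
    by auto
  then show ?thesis
    by (simp only:) (intro finite_imageI finite_permutations, simp)
qed

lemma UP_ge: "p permutes {1..n} \<Longrightarrow> (\<Sum>i=1..n. A i (p i)) \<le> UP A n"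
  unfolding UP_def by (rule Max_ge[OF finite_permutation_sums]) blast

lemma UP_attained:
  obtains p where "p permutes {1..n}" "UP A n = (\<Sum>i=1..n. A i (p i))"
proof -
  have "UP A n \<in> {(\<Sum>i=1..n. A i (p i)) | p. p permutes {1..n}}"
    unfolding UP_def by (rule Max_in[OF finite_permutation_sums]) (use permutes_id in blast)
  then show thesis
    using that by blast
qed

lemma ud_prod_ge: "k \<in> {1..M} \<Longrightarrow> B i k + C k j \<le> ud_prod M B C i j"
  unfolding ud_prod_def by (rule Max_ge) auto

lemma ud_prod_attained:
  assumes "M \<ge> 1"
  obtains k where "k \<in> {1..M}" "ud_prod M B C i j = B i k + C k j"
proof -
  have "{B i k + C k j | k. k \<in> {1..M}} = (\<lambda>k. B i k + C k j) ` {1..M}"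
    by auto
  then have "ud_prod M B C i j \<in> {B i k + C k j | k. k \<in> {1..M}}"
    unfolding ud_prod_def using assms by (intro Max_in) auto
  then show thesis
    using that by blast
qed

lemma sorted_reindexing:
  fixes f :: "nat \<Rightarrow> 'a::linorder"
  obtains js \<tau> where "length js = n" "sorted js" "set js = f ` {1..n}"
    "\<tau> permutes {1..n}" "\<forall>i\<in>{1..n}. f i = js ! (\<tau> i - 1)"
proof -
  define js where "js = sort (map f [1..<n+1])"
  have length_js: "length js = n"
    unfolding js_def by simp
  have shift: "[1..<n+1] = map Suc [0..<n]"
    by (simp only: map_Suc_upt) simp
  have "map (\<lambda>i. js ! (i - 1)) [1..<n+1] = js"
    unfolding shift using length_js map_nth[of js] by (simp add: comp_def del: upt_Suc)
  then have "image_mset f (mset_set {1..n}) = image_mset (\<lambda>i. js ! (i - 1)) (mset_set {1..n})"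
    unfolding js_def by (metis atLeastLessThanSuc_atLeastAtMost mset_map mset_sort mset_upt Suc_eq_plus1)
  then obtain \<tau> where "\<tau> permutes {1..n}" "\<forall>i\<in>{1..n}. f i = js ! (\<tau> i - 1)"
    by (rule image_mset_eq_implies_permutes[OF finite_atLeastAtMost])
  moreover have "sorted js" "set js = f ` {1..n}"
    unfolding js_def by auto
  ultimately show thesis
    using that length_js by blast
qed

lemma UP_sel_cols_add_UP_sel_rows_le:
  assumes "length js = N" "set js \<subseteq> {1..M}"
  shows "UP (sel_cols B js) N + UP (sel_rows C js) N \<le> UP (ud_prod M B C) N"
proof -
  obtain p where p: "p permutes {1..N}" "UP (sel_cols B js) N = (\<Sum>i=1..N. sel_cols B js i (p i))"
    by (rule UP_attained)
  obtain q where q: "q permutes {1..N}" "UP (sel_rows C js) N = (\<Sum>k=1..N. sel_rows C js k (q k))"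
    by (rule UP_attained)
  have "(\<Sum>k=1..N. sel_rows C js k (q k)) = (\<Sum>i=1..N. sel_rows C js (p i) (q (p i)))"
    by (rule sum.permute[OF p(1), unfolded comp_def])
  then have "UP (sel_cols B js) N + UP (sel_rows C js) N =
      (\<Sum>i=1..N. B i (js ! (p i - 1)) + C (js ! (p i - 1)) ((q \<circ> p) i))"
    using p(2) q(2) unfolding sel_cols_def sel_rows_def by (simp add: sum.distrib)
  also have "\<dots> \<le> (\<Sum>i=1..N. ud_prod M B C i ((q \<circ> p) i))"
  proof (rule sum_mono)
    fix i assume "i \<in> {1..N}"
    then have "p i \<in> {1..N}"
      using permutes_in_image[OF p(1)] by simp
    then have "js ! (p i - 1) \<in> set js"
      using assms(1) by (intro nth_mem) auto
    then have "js ! (p i - 1) \<in> {1..M}"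
      using assms(2) by blast
    then show "B i (js ! (p i - 1)) + C (js ! (p i - 1)) ((q \<circ> p) i) \<le> ud_prod M B C i ((q \<circ> p) i)"
      by (rule ud_prod_ge)
  qed
  also have "\<dots> \<le> UP (ud_prod M B C) N"
    by (rule UP_ge[OF permutes_compose[OF p(1) q(1)]])
  finally show ?thesis .
qed

lemma UP_ud_prod_le_UP_sel_cols_add_UP_sel_rows:
  assumes "M \<ge> 1"
  obtains js where "length js = N" "sorted js" "set js \<subseteq> {1..M}"
    "UP (ud_prod M B C) N \<le> UP (sel_cols B js) N + UP (sel_rows C js) N"
proof -
  obtain \<sigma> where \<sigma>: "\<sigma> permutes {1..N}" "UP (ud_prod M B C) N = (\<Sum>i=1..N. ud_prod M B C i (\<sigma> i))"
    by (rule UP_attained)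
  have "\<forall>i. \<exists>k. k \<in> {1..M} \<and> ud_prod M B C i (\<sigma> i) = B i k + C k (\<sigma> i)"
    by (meson ud_prod_attained[OF assms])
  then obtain f where f: "\<And>i. f i \<in> {1..M}" "\<And>i. ud_prod M B C i (\<sigma> i) = B i (f i) + C (f i) (\<sigma> i)"
    by metis
  obtain js \<tau> where js: "length js = N" "sorted js" "set js = f ` {1..N}"
    and \<tau>: "\<tau> permutes {1..N}" "\<forall>i\<in>{1..N}. f i = js ! (\<tau> i - 1)"
    by (rule sorted_reindexing)
  have "UP (ud_prod M B C) N = (\<Sum>i=1..N. B i (js ! (\<tau> i - 1))) + (\<Sum>i=1..N. C (js ! (\<tau> i - 1)) (\<sigma> i))"
    using \<sigma>(2) f(2) \<tau>(2) by (simp add: sum.distrib)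
  moreover have "(\<Sum>i=1..N. B i (js ! (\<tau> i - 1))) \<le> UP (sel_cols B js) N"
    using UP_ge[OF \<tau>(1), of "sel_cols B js"] unfolding sel_cols_def by simp
  moreover have "(\<Sum>i=1..N. C (js ! (\<tau> i - 1)) (\<sigma> i)) = (\<Sum>k=1..N. C (js ! (k - 1)) (\<sigma> (inv \<tau> k)))"
    using sum.permutes_inv[OF \<tau>(1), of "\<lambda>k i. C (js ! (k - 1)) (\<sigma> i)"] by simp
  moreover have "\<dots> \<le> UP (sel_rows C js) N"
    using UP_ge[OF permutes_compose[OF permutes_inv[OF \<tau>(1)] \<sigma>(1)], of "sel_rows C js"]
    unfolding sel_rows_def by simp
  ultimately have "UP (ud_prod M B C) N \<le> UP (sel_cols B js) N + UP (sel_rows C js) N"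
    by linarith
  moreover have "set js \<subseteq> {1..M}"
    using js(3) f(1) by auto
  ultimately show thesis
    using that js(1,2) by blast
qed

theorem proposition1:
  fixes N M :: nat and B C :: "nat \<Rightarrow> nat \<Rightarrow> real"
  assumes "N \<ge> 1" and "M \<ge> 1"
  shows "UP (ud_prod M B C) N =
    Max {UP (sel_cols B js) N + UP (sel_rows C js) N | js.
           length js = N \<and> sorted js \<and> set js \<subseteq> {1..M}}"
proof (rule sym, rule Max_eqI)
  let ?value = "\<lambda>js. UP (sel_cols B js) N + UP (sel_rows C js) N"
  have "{?value js | js. length js = N \<and> sorted js \<and> set js \<subseteq> {1..M}}
      \<subseteq> ?value ` {js. set js \<subseteq> {1..M} \<and> length js = N}"
    by auto
  then show "finite {?value js | js. length js = N \<and> sorted js \<and> set js \<subseteq> {1..M}}"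
    using finite_lists_length_eq[of "{1..M}" N] by (meson finite_imageI finite_atLeastAtMost finite_subset)
  show "y \<le> UP (ud_prod M B C) N"
    if "y \<in> {?value js | js. length js = N \<and> sorted js \<and> set js \<subseteq> {1..M}}" for y
    using that UP_sel_cols_add_UP_sel_rows_le by blast
  obtain js where js: "length js = N" "sorted js" "set js \<subseteq> {1..M}"
    "UP (ud_prod M B C) N \<le> ?value js"
    using UP_ud_prod_le_UP_sel_cols_add_UP_sel_rows[OF assms(2)] by blast
  then have "UP (ud_prod M B C) N = ?value js"
    using UP_sel_cols_add_UP_sel_rows_le[OF js(1,3), where B = B and C = C] by linarith
  then show "UP (ud_prod M B C) N \<in> {?value js | js. length js = N \<and> sorted js \<and> set js \<subseteq> {1..M}}"
    using js by blast
qed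

end
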